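(* Let $(\rho,\sigma)\in\mathfrak V$ with $\sigma\le0$ and let $C,D\in W^{(l)}\setminus\{0\}$ with $v_{\rho,\sigma}(C)>0$. If $[C^k,D]_{\rho,\sigma}=\ell_{\rho,\sigma}(C^{k+j})$ for some $k\in\mathbb{N}$ and $j\in\mathbb{N}_0$, then there exists a $(\rho,\sigma)$-homogeneous element $E\in W^{(l)}$ such that $[C^t,E]_{\rho,\sigma}=t\,\ell_{\rho,\sigma}(C^t)$ for all $t\in\mathbb{N}$.
   Context: $K$ is a field of characteristic zero, $l\in\mathbb{N}$. $W^{(l)}$ is the associative $K$-algebra with $K$-basis $\{X^{i/l}Y^j:i\in\mathbb{Z},j\in\mathbb{N}_0\}$, powers of $X$ multiplying as Laurent monomials and $[Y,X^{\alpha}]=\alpha X^{\alpha-1}$ for $\alpha\in\frac1l\mathbb{Z}$. $L^{(l)}=K[x^{1/l},x^{-1/l},y]$, $\Psi^{(l)}(X^{i/l}Y^j)=x^{i/l}y^j$ ($K$-linear); $\mathrm{Supp}(P)$ = set of exponents of $\Psi^{(l)}(P)$ with nonzero coefficient. $\mathfrak V=\{(\rho,\sigma)\in\mathbb{Z}^2:\gcd(\rho,\sigma)=1,\rho+\sigma>0\}$. For $P\ne0$: $v_{\rho,\sigma}(P)=\max\{\rho a+\sigma b:(a,b)\in\mathrm{Supp}(P)\}$; $\ell_{\rho,\sigma}(P)\in L^{(l)}$ is the sum of the terms of $\Psi^{(l)}(P)$ of $(\rho,\sigma)$-degree $v_{\rho,\sigma}(P)$. $P$ is $(\rho,\sigma)$-homogeneous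 if $P=0$ or $\Psi^{(l)}(P)=\ell_{\rho,\sigma}(P)$. $[P,Q]_{\rho,\sigma}:=0$ if $[P,Q]=0$ or $v_{\rho,\sigma}([P,Q])<v_{\rho,\sigma}(P)+v_{\rho,\sigma}(Q)-(\rho+\sigma)$, and $:=\ell_{\rho,\sigma}([P,Q])$ otherwise. *)

theory Defs
  imports Main "HOL.Rat"
begin

text \<open>Elements of W^(l) (and of L^(l)) are represented by their coefficient functions:
  P (i,j) is the coefficient of X^(i/l) Y^j (resp. x^(i/l) y^j); Psi^(l) is thus the identity
  on representations.\<close>

type_synonym 'k wl = "int \<times> nat \<Rightarrow> 'k"

definition W_supp :: "'k::zero wl \<Rightarrow> (int \<times> nat) set" where
  "W_supp P = {e. P e \<noteq> 0}"

definition W_elem :: "'k::zero wl \<Rightarrow> bool" where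
  "W_elem P \<longleftrightarrow> finite (W_supp P)"

definition W_zero :: "'k::zero wl" where
  "W_zero = (\<lambda>_. 0)"

definition W_one :: "'k::{zero,one} wl" where
  "W_one = (\<lambda>e. if e = (0, 0) then 1 else 0)"

definition W_ff :: "'k::field_char_0 \<Rightarrow> nat \<Rightarrow> 'k" where
  "W_ff b k = (\<Prod>t<k. b - of_nat t)"

text \<open>Product in W^(l): X^(a/l) Y^m * X^(b/l) Y^n
   = sum_k (m choose k) ff(b/l,k) X^((a+b-k l)/l) Y^(m+n-k), since [Y,X^alpha] = alpha X^(alpha-1).\<close>
definition W_mult :: "nat \<Rightarrow> 'k::field_char_0 wl \<Rightarrow> 'k wl \<Rightarrow> 'k wl" where
  "W_mult l P Q = (\<lambda>(a, n). \<Sum>(p, q) \<in> W_supp P \<times> W_supp Q. \<Sum>k \<in> {..snd p}.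
      if fst p + fst q - int k * int l = a \<and> snd p + snd q - k = n
      then P p * Q q * of_nat (snd p choose k) * W_ff (of_int (fst q) / of_nat l) k
      else 0)"

primrec W_pow :: "nat \<Rightarrow> 'k::field_char_0 wl \<Rightarrow> nat \<Rightarrow> 'k wl" where
  "W_pow l P 0 = W_one"
| "W_pow l P (Suc n) = W_mult l (W_pow l P n) P"

definition W_comm :: "nat \<Rightarrow> 'k::field_char_0 wl \<Rightarrow> 'k wl \<Rightarrow> 'k wl" where
  "W_comm l P Q = (\<lambda>e. W_mult l P Q e - W_mult l Q P e)"

definition W_deg :: "nat \<Rightarrow> int \<Rightarrow> int \<Rightarrow> int \<times> nat \<Rightarrow> rat" where
  "W_deg l \<rho> \<sigma> e = of_int \<rho> * (of_int (fst e) / of_nat l) + of_int \<sigma> * of_nat (snd e)"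

definition W_v :: "nat \<Rightarrow> int \<Rightarrow> int \<Rightarrow> 'k::zero wl \<Rightarrow> rat" where
  "W_v l \<rho> \<sigma> P = Max (W_deg l \<rho> \<sigma> ` W_supp P)"

definition W_ell :: "nat \<Rightarrow> int \<Rightarrow> int \<Rightarrow> 'k::zero wl \<Rightarrow> 'k wl" where
  "W_ell l \<rho> \<sigma> P = (\<lambda>e. if W_deg l \<rho> \<sigma> e = W_v l \<rho> \<sigma> P then P e else 0)"

definition W_homog :: "nat \<Rightarrow> int \<Rightarrow> int \<Rightarrow> 'k::zero wl \<Rightarrow> bool" where
  "W_homog l \<rho> \<sigma> P \<longleftrightarrow> P = W_zero \<or> P = W_ell l \<rho> \<sigma> P"

definition W_bracket :: "nat \<Rightarrow> int \<Rightarrow> int \<Rightarrow> 'k::field_char_0 wl \<Rightarrow> 'k wl \<Rightarrow> 'k wl" where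
  "W_bracket l \<rho> \<sigma> P Q =
     (if W_comm l P Q = W_zero
         \<or> W_v l \<rho> \<sigma> (W_comm l P Q) < W_v l \<rho> \<sigma> P + W_v l \<rho> \<sigma> Q - of_int (\<rho> + \<sigma>)
      then W_zero else W_ell l \<rho> \<sigma> (W_comm l P Q))"

definition frakV :: "(int \<times> int) set" where
  "frakV = {(\<rho>, \<sigma>). gcd \<rho> \<sigma> = 1 \<and> \<rho> + \<sigma> > 0}"

end

theory Submission
  imports Defs "HOL-Computational_Algebra.Polynomial_Factorial"
begin

text \<open>Let F and G be the polynomials in y of the (\<rho>,\<sigma>)-leading forms of C and D, of degrees
  v = v(C) > 0 and w = v(D).  The leading form of a commutator of forms is their Poisson bracket,
  which by the Euler relation becomes (w F' G - v F G') / \<rho> on the y-polynomials.  Comparing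
  degrees and leading forms in the hypothesis gives w = j v + \<rho> + \<sigma> and
  k (w F' G - v F G') = \<rho> F^(j+1).  Let p be an irreducible factor of F, with p^m and p^n the
  exact powers of p dividing F and G.  If n < j m, then w m - v n > 0 and p does not divide p', so
  the left side is divisible by p^(m+n-1) but not by p^(m+n), while the right side is divisible by
  p^(m(j+1)).  Hence n \<ge> j m for every p, i.e. F^j divides G.  Writing G = F^j Q, the polynomial
  k Q satisfies ((\<rho> + \<sigma>) F' (k Q) - v F (k Q)') / \<rho> = F, so the homogeneous element E of
  degree \<rho> + \<sigma> with y-polynomial k Q has [C^t, E] with leading form t ell(C^t) for every t.\<close>

section \<open>Divisibility of polynomials from a Wronskian identity\<close>

lemma field_poly_prime_factor_exists:
  fixes F :: "'a::field poly"
  assumes "degree F \<noteq> 0"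
  shows "\<exists>p. prime_elem p \<and> p dvd F"
  using assms
proof (induction "degree F" arbitrary: F rule: less_induct)
  case less
  have F0: "F \<noteq> 0" using less.prems by auto
  with less.prems have F_not_unit: "\<not> is_unit F" by (simp add: is_unit_iff_degree)
  show ?case
  proof (cases "irreducible F")
    case True
    then have "prime_elem F" by (rule field_poly_irreducible_imp_prime)
    then show ?thesis by (blast intro: dvd_refl)
  next
    case False
    then obtain a b where ab: "F = a * b" "\<not> is_unit a" "\<not> is_unit b"
      using F0 F_not_unit unfolding irreducible_def by blast
    then have "a \<noteq> 0" "b \<noteq> 0" using F0 by auto
    with ab have "degree a \<noteq> 0" "degree b \<noteq> 0" by (auto simp: is_unit_iff_degree)
    with ab(1) \<open>a \<noteq> 0\<close> \<open>b \<noteq> 0\<close> have "degree a < degree F" by (simp add: degree_mult_eq)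
    with less.hyps \<open>degree a \<noteq> 0\<close> obtain p where "prime_elem p" "p dvd a" by blast
    with ab(1) show ?thesis by (meson dvd_mult2)
  qed
qed


lemma field_poly_prime_power_decomposition:
  fixes F p :: "'a::field poly"
  assumes "F \<noteq> 0" and "\<not> is_unit p"
  shows "\<exists>a R. F = p ^ a * R \<and> \<not> p dvd R"
  using assms(1)
proof (induction "degree F" arbitrary: F rule: less_induct)
  case less
  show ?case
  proof (cases "p dvd F")
    case False
    then show ?thesis by (metis power_0 mult_1)
  next
    case True
    then obtain F1 where F1: "F = p * F1" by (elim dvdE)
    with less.prems have "p \<noteq> 0" and "F1 \<noteq> 0" by auto
    with assms(2) have "degree p \<noteq> 0" by (auto simp: is_unit_iff_degree)
    with F1 \<open>p \<noteq> 0\<close> \<open>F1 \<noteq> 0\<close> have "degree F1 < degree F" by (simp add: degree_mult_eq)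
    with less.hyps \<open>F1 \<noteq> 0\<close> obtain a R where "F1 = p ^ a * R" and "\<not> p dvd R" by blast
    with F1 have "F = p ^ Suc a * R \<and> \<not> p dvd R" by (simp add: mult.assoc)
    then show ?thesis by blast
  qed
qed

lemma prime_power_dvd_of_mult_prime:
  fixes p q :: "'a::algebraic_semidom"
  assumes p: "prime_elem p" and q: "prime_elem q"
    and dvd: "\<And>b R. p * F = q ^ b * R \<Longrightarrow> \<not> q dvd R \<Longrightarrow> q ^ (j * b) dvd p ^ j * G"
    and FR: "F = q ^ b * R" and R: "\<not> q dvd R"
  shows "q ^ (j * b) dvd G"
proof (cases "q dvd p")
  case True
  then obtain u where u: "p = q * u" by (elim dvdE)
  with p q have "is_unit u"
    using prime_elem_imp_irreducible irreducibleD prime_elem_not_unit by metis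
  from FR u have "p * F = q ^ Suc b * (u * R)" by (simp add: ac_simps)
  moreover from R \<open>is_unit u\<close> have "\<not> q dvd u * R" by (simp add: dvd_mult_unit_iff')
  ultimately have "q ^ (j * Suc b) dvd p ^ j * G" by (rule dvd)
  then have "q ^ j * q ^ (j * b) dvd q ^ j * (u ^ j * G)"
    using u by (simp add: power_add power_mult_distrib ac_simps)
  then have "q ^ (j * b) dvd u ^ j * G" using q by (simp add: prime_elem_def)
  then show ?thesis using \<open>is_unit u\<close> by (simp add: dvd_mult_unit_iff' is_unit_power_iff)
next
  case False
  from FR have "p * F = q ^ b * (p * R)" by (simp add: ac_simps)
  moreover from False R q have "\<not> q dvd p * R" by (simp add: prime_elem_dvd_mult_iff)
  ultimately have "q ^ (j * b) dvd p ^ j * G" by (rule dvd)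
  moreover from False q have "\<not> q dvd p ^ j" by (simp add: prime_elem_dvd_power_iff)
  ultimately show ?thesis using q by (cases "j * b = 0") (auto dest: prime_power_dvd_multD)
qed

lemma field_poly_power_dvd_if_prime_powers_dvd:
  fixes F G :: "'a::field poly"
  assumes "F \<noteq> 0"
    and "\<And>p a R. prime_elem p \<Longrightarrow> F = p ^ a * R \<Longrightarrow> \<not> p dvd R \<Longrightarrow> p ^ (j * a) dvd G"
  shows "F ^ j dvd G"
  using assms
proof (induction "degree F" arbitrary: F G rule: less_induct)
  case less
  show ?case
  proof (cases "degree F = 0")
    case True
    with less.prems(1) have "is_unit (F ^ j)" by (simp add: is_unit_iff_degree is_unit_power_iff)
    then show ?thesis by (rule unit_imp_dvd)
  next
    case False
    then obtain p where p: "prime_elem p" "p dvd F" using field_poly_prime_factor_exists by blast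
    then obtain F1 where F1: "F = p * F1" by (elim dvdE)
    with less.prems(1) have "p \<noteq> 0" and "F1 \<noteq> 0" by auto
    with prime_elem_not_unit[OF p(1)] have "degree p \<noteq> 0" by (simp add: is_unit_iff_degree)
    with F1 \<open>p \<noteq> 0\<close> \<open>F1 \<noteq> 0\<close> have deg: "degree F1 < degree F" by (simp add: degree_mult_eq)
    obtain a R where aR: "F = p ^ a * R" "\<not> p dvd R"
      using field_poly_prime_power_decomposition[OF less.prems(1) prime_elem_not_unit[OF p(1)]] by blast
    with p(2) have "a \<noteq> 0" by (metis mult_1 power_0)
    then have "p ^ j dvd p ^ (j * a)" by (intro le_imp_power_dvd) simp
    also have "\<dots> dvd G" using less.prems(2)[OF p(1) aR] .
    finally obtain G1 where G1: "G = p ^ j * G1" by (elim dvdE)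
    have "F1 ^ j dvd G1"
    proof (rule less.hyps[OF deg \<open>F1 \<noteq> 0\<close>])
      fix q b R' assume q: "prime_elem q" and qR': "F1 = q ^ b * R'" "\<not> q dvd R'"
      show "q ^ (j * b) dvd G1"
      proof (rule prime_power_dvd_of_mult_prime[OF p(1) q _ qR'])
        fix b R assume "p * F1 = q ^ b * R" and "\<not> q dvd R"
        with q show "q ^ (j * b) dvd p ^ j * G1"
          unfolding F1[symmetric] G1[symmetric] by (rule less.prems(2))
      qed
    qed
    then show ?thesis using F1 G1 by (simp add: power_mult_distrib mult_dvd_mono)
  qed
qed

lemma prime_elem_not_dvd_pderiv:
  fixes p :: "'a::field_char_0 poly"
  assumes "prime_elem p"
  shows "\<not> p dvd pderiv p"
proof
  assume dvd: "p dvd pderiv p"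
  from assms have "p \<noteq> 0" and "\<not> is_unit p" by (auto simp: prime_elem_def)
  then have "degree p \<noteq> 0" by (simp add: is_unit_iff_degree)
  then have "pderiv p \<noteq> 0" by (simp add: pderiv_eq_0_iff)
  with dvd have "degree p \<le> degree (pderiv p)" by (rule dvd_imp_degree_le)
  with \<open>degree p \<noteq> 0\<close> show False by (simp add: degree_pderiv)
qed

lemma wronskian_prime_power_expansion:
  fixes p R S :: "'a::field_char_0 poly"
  assumes "m \<noteq> 0"
  shows "smult w (pderiv (p ^ m * R) * (p ^ n * S)) - smult v (p ^ m * R * pderiv (p ^ n * S))
       = smult (w * of_nat m - v * of_nat n) (p ^ (m + n - 1) * (pderiv p * R * S))
         + p ^ (m + n) * (smult w (pderiv R * S) - smult v (R * pderiv S))"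
proof -
  obtain m' where m: "m = Suc m'" using assms by (cases m) auto
  show ?thesis
  proof (cases n)
    case 0
    then show ?thesis unfolding m
      by (simp add: pderiv_mult pderiv_power algebra_simps smult_add_right smult_diff_right
          del: power_Suc)
  next
    case (Suc n')
    then show ?thesis unfolding m
      by (simp add: pderiv_mult pderiv_power algebra_simps smult_add_right smult_diff_right
          power_add del: power_Suc)
        (simp add: power_add algebra_simps smult_diff_left smult_add_left)
  qed
qed

lemma prime_power_not_dvd_wronskian:
  fixes p R S :: "'a::field_char_0 poly"
  assumes p: "prime_elem p" and "m \<noteq> 0" and R: "\<not> p dvd R" and S: "\<not> p dvd S"
    and nonzero: "w * of_nat m - v * of_nat n \<noteq> 0"
  shows "\<not> p ^ (m + n) dvd
           smult w (pderiv (p ^ m * R) * (p ^ n * S)) - smult v (p ^ m * R * pderiv (p ^ n * S))"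
proof
  define Y where "Y = smult (w * of_nat m - v * of_nat n) (pderiv p * R * S)"
  assume "p ^ (m + n) dvd
           smult w (pderiv (p ^ m * R) * (p ^ n * S)) - smult v (p ^ m * R * pderiv (p ^ n * S))"
  then have "p ^ (m + n) dvd p ^ (m + n - 1) * Y + p ^ (m + n) * (smult w (pderiv R * S) - smult v (R * pderiv S))"
    unfolding wronskian_prime_power_expansion[OF \<open>m \<noteq> 0\<close>] Y_def by (simp add: mult_smult_right)
  then have "p ^ (m + n - 1) * p dvd p ^ (m + n - 1) * Y"
    using \<open>m \<noteq> 0\<close> by (simp add: dvd_add_left_iff flip: power_Suc2)
  with p have "p dvd Y" by (simp add: prime_elem_def)
  with nonzero have "p dvd pderiv p * R * S" by (simp add: Y_def dvd_smult_cancel)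
  with p R S prime_elem_not_dvd_pderiv[OF p] show False by (simp add: prime_elem_dvd_mult_iff)
qed

lemma power_dvd_of_wronskian_eq:
  fixes F G :: "'a::field_char_0 poly"
  assumes F: "F \<noteq> 0" and G: "G \<noteq> 0"
    and eq: "smult w (pderiv F * G) - smult v (F * pderiv G) = smult c (F ^ (j + 1))"
    and nonresonant: "\<And>m n. 0 < m \<Longrightarrow> n < j * m \<Longrightarrow> w * of_nat m - v * of_nat n \<noteq> 0"
  shows "F ^ j dvd G"
proof (rule field_poly_power_dvd_if_prime_powers_dvd[OF F])
  fix p a R assume p: "prime_elem p" and FR: "F = p ^ a * R" and R: "\<not> p dvd R"
  obtain b S where GS: "G = p ^ b * S" and S: "\<not> p dvd S"
    using field_poly_prime_power_decomposition[OF G prime_elem_not_unit[OF p]] by blast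
  show "p ^ (j * a) dvd G"
  proof (cases "j * a \<le> b")
    case True
    then show ?thesis unfolding GS by (simp add: le_imp_power_dvd)
  next
    case False
    then have "a \<noteq> 0" by (metis mult_0_right le0)
    have "p ^ (a + b) dvd p ^ (a * (j + 1))" using False by (intro le_imp_power_dvd) (simp add: algebra_simps)
    then have "p ^ (a + b) dvd p ^ (a * (j + 1)) * smult c (R ^ (j + 1))" by (rule dvd_mult2)
    also have "\<dots> = smult c (F ^ (j + 1))"
      unfolding FR power_mult_distrib power_mult by (simp add: mult_smult_right)
    finally have "p ^ (a + b) dvd smult c (F ^ (j + 1))" .
    moreover have "\<not> p ^ (a + b) dvd smult w (pderiv F * G) - smult v (F * pderiv G)"
      unfolding FR GS
      using False \<open>a \<noteq> 0\<close> by (intro prime_power_not_dvd_wronskian p R S nonresonant) auto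
    ultimately show ?thesis unfolding eq by contradiction
  qed
qed

section \<open>Leading forms with respect to a (\<rho>,\<sigma>)-grading\<close>

locale rho_sigma_grading =
  fixes l :: nat and \<rho> \<sigma> :: int
  assumes l_pos: "l \<ge> 1" and rho_pos: "\<rho> > 0" and rho_sigma_pos: "\<rho> + \<sigma> > 0"
begin

abbreviation deg where "deg \<equiv> W_deg l \<rho> \<sigma>"
abbreviation val where "val \<equiv> W_v l \<rho> \<sigma>"
abbreviation rs :: rat where "rs \<equiv> of_int (\<rho> + \<sigma>)"

text \<open>For fixed degree d and y-exponent b there is at most one x-exponent a with deg (a, b) = d,
  so the degree-d part of an element is faithfully encoded by the polynomial in y of its
  coefficients, and conversely a polynomial H in y is the encoding of a degree-d element if every
  y-exponent of H admits such an a.\<close>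

definition form_poly :: "rat \<Rightarrow> 'k::field_char_0 wl \<Rightarrow> 'k poly" where
  "form_poly d P = (\<Sum>e \<in> {e \<in> W_supp P. deg e = d}. monom (P e) (snd e))"

definition poly_form :: "rat \<Rightarrow> 'k::field_char_0 poly \<Rightarrow> 'k wl" where
  "poly_form d H = (\<lambda>e. if deg e = d then coeff H (snd e) else 0)"

definition realizable :: "rat \<Rightarrow> 'k::field_char_0 poly \<Rightarrow> bool" where
  "realizable d H \<longleftrightarrow> (\<forall>b. coeff H b \<noteq> 0 \<longrightarrow> (\<exists>a. deg (a, b) = d))"

lemma rs_pos: "rs > 0"
  using rho_sigma_pos by simp

lemma deg_inj_fst: "deg (a, b) = deg (a', b) \<Longrightarrow> a = a'"
proof -
  assume "deg (a, b) = deg (a', b)"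
  then have "of_int \<rho> * (of_int a / of_nat l) = (of_int \<rho> * (of_int a' / of_nat l) :: rat)"
    by (simp add: W_deg_def)
  with rho_pos l_pos have "(of_int a :: rat) = of_int a'" by (simp add: divide_cancel_right)
  then show "a = a'" by simp
qed

lemma deg_snd_inj: "deg e = deg e' \<Longrightarrow> snd e = snd e' \<Longrightarrow> e = e'"
  using deg_inj_fst[of "fst e" "snd e" "fst e'"] by (cases e, cases e') auto

lemma deg_shift:
  assumes "k \<le> snd p"
  shows "deg (fst p + fst q - int k * int l, snd p + snd q - k) = deg p + deg q - of_nat k * rs"
proof -
  have y: "of_nat (snd p + snd q - k) = (of_nat (snd p) + of_nat (snd q) - of_nat k :: rat)"
    using assms by (simp add: of_nat_diff)
  have x: "(of_int (fst p + fst q - int k * int l) / of_nat l :: rat)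
      = of_int (fst p) / of_nat l + of_int (fst q) / of_nat l - of_nat k"
    using l_pos by (simp add: add_divide_distrib diff_divide_distrib)
  show ?thesis unfolding W_deg_def fst_conv snd_conv x y by (simp add: algebra_simps)
qed

lemma deg_add: "deg (fst p + fst q, snd p + snd q) = deg p + deg q"
  using deg_shift[of 0 p q] by simp

lemma deg_shift1:
  assumes "snd p + snd q \<ge> 1"
  shows "deg (fst p + fst q - int l, snd p + snd q - 1) = deg p + deg q - rs"
proof (cases "snd p \<ge> 1")
  case True
  then show ?thesis using deg_shift[of 1 p q] by simp
next
  case False
  with assms have "snd q \<ge> 1" by simp
  then show ?thesis using deg_shift[of 1 q p] by (simp add: add.commute)
qed

lemma deg_le_val: "W_elem P \<Longrightarrow> e \<in> W_supp P \<Longrightarrow> deg e \<le> val P"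
  unfolding W_v_def W_elem_def by (rule Max_ge) auto

lemma val_attained:
  assumes "W_elem P" and "P \<noteq> W_zero"
  obtains e where "P e \<noteq> 0" and "deg e = val P"
proof -
  from assms(2) have "W_supp P \<noteq> {}" by (auto simp: W_supp_def W_zero_def)
  with assms(1) have "val P \<in> deg ` W_supp P"
    unfolding W_v_def W_elem_def by (intro Max_in) auto
  then show thesis using that by (auto simp: W_supp_def)
qed

lemma coeff_form_poly_sum:
  "coeff (form_poly d P) b = (\<Sum>e \<in> {e \<in> W_supp P. deg e = d}. if snd e = b then P e else 0)"
  unfolding form_poly_def by (simp add: coeff_sum coeff_monom)

lemma coeff_form_poly:
  assumes "W_elem P" and "deg (a, b) = d"
  shows "coeff (form_poly d P) b = P (a, b)"
proof -
  have fin: "finite {e \<in> W_supp P. deg e = d}" using assms(1) by (auto simp: W_elem_def)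
  have "coeff (form_poly d P) b
      = (\<Sum>e \<in> {e \<in> W_supp P. deg e = d}. if e = (a, b) then P e else 0)"
    unfolding coeff_form_poly_sum
  proof (intro sum.cong refl)
    fix e assume "e \<in> {e \<in> W_supp P. deg e = d}"
    with assms(2) have "snd e = b \<longleftrightarrow> e = (a, b)" using deg_snd_inj[of e "(a, b)"] by auto
    then show "(if snd e = b then P e else 0) = (if e = (a, b) then P e else 0)" by simp
  qed
  also have "\<dots> = P (a, b)" using fin assms(2) by (simp add: sum.delta W_supp_def)
  finally show ?thesis .
qed

lemma realizable_form_poly: "realizable d (form_poly d P)"
  unfolding realizable_def
proof (intro allI impI)
  fix b assume "coeff (form_poly d P) b \<noteq> 0"
  then obtain e where "e \<in> {e \<in> W_supp P. deg e = d}" and "(if snd e = b then P e else 0) \<noteq> 0"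
    unfolding coeff_form_poly_sum by (rule sum.not_neutral_contains_not_neutral)
  then have "deg (fst e, b) = d" by (auto split: if_splits)
  then show "\<exists>a. deg (a, b) = d" by blast
qed

lemma form_poly_val_nonzero:
  assumes "W_elem P" and "P \<noteq> W_zero"
  shows "form_poly (val P) P \<noteq> 0"
proof -
  obtain e where e: "P e \<noteq> 0" "deg e = val P" using val_attained[OF assms] .
  have "coeff (form_poly (val P) P) (snd e) = P (fst e, snd e)"
    using e(2) by (intro coeff_form_poly[OF assms(1)]) simp
  with e(1) show ?thesis by auto
qed

lemma W_elem_poly_form: "W_elem (poly_form d H)"
proof -
  let ?A = "{e. deg e = d \<and> snd e \<le> degree H}"
  have "inj_on snd ?A" by (rule inj_onI) (rule deg_snd_inj, auto)
  moreover have "snd ` ?A \<subseteq> {..degree H}" by auto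
  ultimately have "finite ?A" by (meson finite_atMost finite_imageD finite_subset)
  moreover have "W_supp (poly_form d H) \<subseteq> ?A"
    by (auto simp: W_supp_def poly_form_def split: if_splits intro: le_degree)
  ultimately show ?thesis unfolding W_elem_def by (rule finite_subset[rotated])
qed

lemma poly_form_apply_smult: "poly_form d (smult c H) e = c * poly_form d H e"
  by (simp add: poly_form_def)

lemma poly_form_nonzero:
  assumes "realizable d H" and "H \<noteq> 0"
  obtains e where "deg e = d" and "poly_form d H e \<noteq> 0"
proof -
  from assms(2) have "coeff H (degree H) \<noteq> 0" by simp
  with assms(1) obtain a where "deg (a, degree H) = d" unfolding realizable_def by blast
  with \<open>coeff H (degree H) \<noteq> 0\<close> show thesis by (intro that) (auto simp: poly_form_def)
qed

lemma val_form_poly_eqI: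
  assumes R: "W_elem R" and H: "realizable d H" "H \<noteq> 0"
    and top: "\<And>e. deg e \<ge> d \<Longrightarrow> R e = poly_form d H e"
  shows "R \<noteq> W_zero" and "val R = d" and "form_poly d R = H"
proof -
  obtain e0 where e0: "deg e0 = d" "poly_form d H e0 \<noteq> 0" using poly_form_nonzero[OF H] .
  with top have "R e0 \<noteq> 0" by simp
  then show R0: "R \<noteq> W_zero" by (auto simp: W_zero_def)
  have "d \<le> val R" using deg_le_val[OF R, of e0] \<open>R e0 \<noteq> 0\<close> e0(1) by (simp add: W_supp_def)
  obtain e1 where e1: "R e1 \<noteq> 0" "deg e1 = val R" using val_attained[OF R R0] .
  show "val R = d"
  proof (rule ccontr)
    assume "val R \<noteq> d"
    with \<open>d \<le> val R\<close> e1(2) have "deg e1 > d" by simp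
    with top have "R e1 = 0" by (simp add: poly_form_def)
    with e1(1) show False by simp
  qed
  show "form_poly d R = H"
  proof (rule poly_eqI)
    fix b
    show "coeff (form_poly d R) b = coeff H b"
    proof (cases "\<exists>a. deg (a, b) = d")
      case True
      then obtain a where a: "deg (a, b) = d" by blast
      then show ?thesis using coeff_form_poly[OF R a] top[of "(a, b)"] by (simp add: poly_form_def)
    next
      case False
      then show ?thesis using H(1) realizable_form_poly[of d R] unfolding realizable_def by metis
    qed
  qed
qed

lemma coeff_form_poly_poly_form:
  "coeff (form_poly d (poly_form d Q)) b = (if \<exists>a. deg (a, b) = d then coeff Q b else 0)"
proof (cases "\<exists>a. deg (a, b) = d")
  case True
  then obtain a where a: "deg (a, b) = d" by blast
  have "coeff (form_poly d (poly_form d Q)) b = poly_form d Q (a, b)"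
    by (rule coeff_form_poly[OF W_elem_poly_form a])
  with a True show ?thesis by (simp add: poly_form_def)
next
  case False
  with realizable_form_poly[of d "poly_form d Q"] show ?thesis unfolding realizable_def by auto
qed

lemma form_poly_poly_form:
  assumes "realizable d H"
  shows "form_poly d (poly_form d H) = H"
proof (rule poly_eqI)
  fix b
  show "coeff (form_poly d (poly_form d H)) b = coeff H b"
    unfolding coeff_form_poly_poly_form using assms by (simp add: realizable_def) blast
qed

lemma poly_form_inj:
  assumes "realizable d1 H1" "H1 \<noteq> 0" "realizable d2 H2"
    and eq: "poly_form d1 H1 = poly_form d2 H2"
  shows "d1 = d2" and "H1 = H2"
proof -
  obtain e where e: "deg e = d1" "poly_form d1 H1 e \<noteq> 0" using poly_form_nonzero[OF assms(1,2)] .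
  from e(2) have "poly_form d2 H2 e \<noteq> 0" unfolding eq .
  with e(1) show d: "d1 = d2" unfolding poly_form_def by (auto split: if_splits)
  have "H1 = form_poly d1 (poly_form d1 H1)" by (rule form_poly_poly_form[OF assms(1), symmetric])
  also have "\<dots> = form_poly d2 (poly_form d2 H2)" by (simp only: d eq[unfolded d])
  also have "\<dots> = H2" by (rule form_poly_poly_form[OF assms(3)])
  finally show "H1 = H2" .
qed

lemma W_ell_eq_poly_form:
  assumes "W_elem P"
  shows "W_ell l \<rho> \<sigma> P = poly_form (val P) (form_poly (val P) P)"
proof
  fix e
  show "W_ell l \<rho> \<sigma> P e = poly_form (val P) (form_poly (val P) P) e"
  proof (cases "deg e = val P")
    case True
    then have "coeff (form_poly (val P) P) (snd e) = P (fst e, snd e)"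
      by (intro coeff_form_poly[OF assms]) simp
    with True show ?thesis by (simp add: W_ell_def poly_form_def)
  qed (simp add: W_ell_def poly_form_def)
qed

lemma W_homog_poly_form: "W_homog l \<rho> \<sigma> (poly_form d H)"
proof (cases "poly_form d H = W_zero")
  case False
  then obtain e0 where "poly_form d H e0 \<noteq> 0" by (auto simp: W_zero_def fun_eq_iff)
  have "deg ` W_supp (poly_form d H) = {d}"
  proof
    show "deg ` W_supp (poly_form d H) \<subseteq> {d}"
      by (auto simp: W_supp_def poly_form_def split: if_splits)
    show "{d} \<subseteq> deg ` W_supp (poly_form d H)"
      using \<open>poly_form d H e0 \<noteq> 0\<close> by (force simp: W_supp_def poly_form_def split: if_splits)
  qed
  then have "val (poly_form d H) = d" by (simp add: W_v_def)
  then show ?thesis by (auto simp: W_homog_def W_ell_def poly_form_def)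
qed (simp add: W_homog_def)


subsection \<open>Leading forms of products\<close>

definition mult_term :: "'k::field_char_0 wl \<Rightarrow> 'k wl \<Rightarrow> int \<times> nat \<Rightarrow> int \<times> nat \<Rightarrow> int \<times> nat \<Rightarrow> nat \<Rightarrow> 'k"
  where "mult_term P Q e p q k =
    (if fst p + fst q - int k * int l = fst e \<and> snd p + snd q - k = snd e
     then P p * Q q * of_nat (snd p choose k) * W_ff (of_int (fst q) / of_nat l) k else 0)"

lemma W_mult_eq_sum:
  "W_mult l P Q e = (\<Sum>p\<in>W_supp P. \<Sum>q\<in>W_supp Q. \<Sum>k\<le>snd p. mult_term P Q e p q k)"
proof -
  have "W_mult l P Q e = (\<Sum>(p, q)\<in>W_supp P \<times> W_supp Q. \<Sum>k\<le>snd p. mult_term P Q e p q k)"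
    by (cases e) (simp add: W_mult_def mult_term_def)
  also have "\<dots> = (\<Sum>p\<in>W_supp P. \<Sum>q\<in>W_supp Q. \<Sum>k\<le>snd p. mult_term P Q e p q k)"
    by (rule sum.cartesian_product[symmetric])
  finally show ?thesis .
qed

lemma mult_term_deg:
  assumes "mult_term P Q e p q k \<noteq> 0" and "k \<le> snd p"
  shows "deg e = deg p + deg q - of_nat k * rs"
proof -
  from assms(1) have "e = (fst p + fst q - int k * int l, snd p + snd q - k)"
    unfolding mult_term_def by (cases e) (auto split: if_splits)
  with deg_shift[OF assms(2), of q] show ?thesis by simp
qed

lemma mult_term_0:
  "mult_term P Q e p q 0 = (if fst p + fst q = fst e \<and> snd p + snd q = snd e then P p * Q q else 0)"
  by (simp add: mult_term_def W_ff_def)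

lemma sum_supp_eq_sum_top:
  assumes P: "W_elem P" and Q: "W_elem Q"
    and top: "\<And>p q. p \<in> W_supp P \<Longrightarrow> q \<in> W_supp Q \<Longrightarrow> f p q \<noteq> 0 \<Longrightarrow> val P + val Q \<le> deg p + deg q"
  shows "(\<Sum>p\<in>W_supp P. \<Sum>q\<in>W_supp Q. f p q)
       = (\<Sum>p\<in>{e \<in> W_supp P. deg e = val P}. \<Sum>q\<in>{e \<in> W_supp Q. deg e = val Q}. f p q)"
proof -
  have fin: "finite (W_supp P)" "finite (W_supp Q)" using P Q by (auto simp: W_elem_def)
  have zero: "f p q = 0" if "p \<in> W_supp P" "q \<in> W_supp Q" "deg p \<noteq> val P \<or> deg q \<noteq> val Q" for p q
    using top[OF that(1,2)] deg_le_val[OF P that(1)] deg_le_val[OF Q that(2)] that(3) by fastforce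
  have "(\<Sum>p\<in>W_supp P. \<Sum>q\<in>W_supp Q. f p q) = (\<Sum>p\<in>{e \<in> W_supp P. deg e = val P}. \<Sum>q\<in>W_supp Q. f p q)"
    using zero by (intro sum.mono_neutral_right fin) (auto intro: sum.neutral)
  also have "\<dots> = (\<Sum>p\<in>{e \<in> W_supp P. deg e = val P}. \<Sum>q\<in>{e \<in> W_supp Q. deg e = val Q}. f p q)"
    using zero by (intro sum.cong refl sum.mono_neutral_right fin) auto
  finally show ?thesis .
qed

lemma coeff_form_poly_mult:
  "coeff (form_poly d1 P * form_poly d2 Q) b =
     (\<Sum>p\<in>{e \<in> W_supp P. deg e = d1}. \<Sum>q\<in>{e \<in> W_supp Q. deg e = d2}.
        if snd p + snd q = b then P p * Q q else 0)"
  unfolding form_poly_def sum_product mult_monom by (simp add: coeff_sum coeff_monom)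

lemma sum_mult_term_eq_0th:
  assumes P: "W_elem P" and Q: "W_elem Q" and p: "p \<in> W_supp P" and q: "q \<in> W_supp Q"
    and ge: "val P + val Q \<le> deg e"
  shows "(\<Sum>k\<le>snd p. mult_term P Q e p q k) = mult_term P Q e p q 0"
proof -
  have "mult_term P Q e p q k = 0" if k: "k \<in> {..snd p} - {0}" for k
  proof (rule ccontr)
    assume "mult_term P Q e p q k \<noteq> 0"
    with k have "deg e = deg p + deg q - of_nat k * rs" by (intro mult_term_deg) auto
    moreover have "of_nat k * rs > 0" using k rs_pos by simp
    ultimately show False using ge deg_le_val[OF P p] deg_le_val[OF Q q] by linarith
  qed
  then have "(\<Sum>k\<le>snd p. mult_term P Q e p q k) = (\<Sum>k\<in>{0}. mult_term P Q e p q k)"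
    by (intro sum.mono_neutral_right) auto
  then show ?thesis by simp
qed

lemma W_mult_top:
  assumes P: "W_elem P" and Q: "W_elem Q" and ge: "val P + val Q \<le> deg e"
  shows "W_mult l P Q e =
    (if deg e = val P + val Q then coeff (form_poly (val P) P * form_poly (val Q) Q) (snd e) else 0)"
proof -
  define f where "f p q = (if fst p + fst q = fst e \<and> snd p + snd q = snd e then P p * Q q else 0)"
    for p q
  have f_deg: "deg p + deg q = deg e" if "f p q \<noteq> 0" for p q
  proof -
    from that have "e = (fst p + fst q, snd p + snd q)" by (cases e) (auto simp: f_def split: if_splits)
    then show ?thesis using deg_add[of p q] by simp
  qed
  have "W_mult l P Q e = (\<Sum>p\<in>W_supp P. \<Sum>q\<in>W_supp Q. f p q)"
    unfolding W_mult_eq_sum using sum_mult_term_eq_0th[OF P Q _ _ ge] by (simp add: mult_term_0 f_def)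
  also have "\<dots> = (\<Sum>p\<in>{e \<in> W_supp P. deg e = val P}. \<Sum>q\<in>{e \<in> W_supp Q. deg e = val Q}. f p q)"
    using f_deg ge by (intro sum_supp_eq_sum_top P Q) auto
  also have "\<dots> = (if deg e = val P + val Q
      then coeff (form_poly (val P) P * form_poly (val Q) Q) (snd e) else 0)"
  proof (cases "deg e = val P + val Q")
    case True
    have "f p q = (if snd p + snd q = snd e then P p * Q q else 0)"
      if "deg p = val P" "deg q = val Q" for p q
    proof -
      have "fst p + fst q = fst e" if "snd p + snd q = snd e"
        using deg_add[of p q] \<open>deg p = val P\<close> \<open>deg q = val Q\<close> True that
        by (intro deg_inj_fst[of _ "snd e"]) (simp add: prod.collapse)
      then show ?thesis by (auto simp: f_def)
    qed
    then show ?thesis using True by (simp add: coeff_form_poly_mult)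
  next
    case False
    then have "f p q = 0" if "deg p = val P" "deg q = val Q" for p q
      using f_deg that by fastforce
    with False show ?thesis by simp
  qed
  finally show ?thesis .
qed

subsection \<open>Leading forms of commutators\<close>

definition bracket_term :: "'k::field_char_0 wl \<Rightarrow> 'k wl \<Rightarrow> int \<times> nat \<Rightarrow> int \<times> nat \<Rightarrow> int \<times> nat \<Rightarrow> 'k"
  where "bracket_term P Q e p q =
    (if fst p + fst q - int l = fst e \<and> snd p + snd q - 1 = snd e
     then P p * Q q * of_nat (snd p) * (of_int (fst q) / of_nat l) else 0)"

lemma mult_term_Suc_0: "mult_term P Q e p q (Suc 0) = bracket_term P Q e p q"
  by (simp add: mult_term_def bracket_term_def W_ff_def)

lemma bracket_term_deg:
  assumes "bracket_term P Q e p q \<noteq> 0"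
  shows "deg e = deg p + deg q - rs"
proof -
  from assms have "snd p \<ge> 1" and "e = (fst p + fst q - int l, snd p + snd q - 1)"
    unfolding bracket_term_def by (cases e; auto split: if_splits)+
  with deg_shift1[of p q] show ?thesis by simp
qed

lemma sum_mult_term_eq_0th_1st:
  assumes P: "W_elem P" and Q: "W_elem Q" and p: "p \<in> W_supp P" and q: "q \<in> W_supp Q"
    and ge: "val P + val Q - rs \<le> deg e"
  shows "(\<Sum>k\<le>snd p. mult_term P Q e p q k) = mult_term P Q e p q 0 + bracket_term P Q e p q"
proof (cases "snd p = 0")
  case True
  then show ?thesis by (simp add: mult_term_def bracket_term_def)
next
  case False
  have "mult_term P Q e p q k = 0" if k: "k \<in> {..snd p} - {0, 1}" for k
  proof (rule ccontr)
    assume "mult_term P Q e p q k \<noteq> 0"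
    with k have "deg e = deg p + deg q - of_nat k * rs" by (intro mult_term_deg) auto
    moreover have "of_nat k * rs > rs" using mult_strict_right_mono[of 1 "of_nat k" rs] k rs_pos by auto
    ultimately show False using ge deg_le_val[OF P p] deg_le_val[OF Q q] by linarith
  qed
  then have "(\<Sum>k\<le>snd p. mult_term P Q e p q k) = (\<Sum>k\<in>{0, 1}. mult_term P Q e p q k)"
    using False by (intro sum.mono_neutral_right) auto
  then show ?thesis by (simp add: mult_term_Suc_0)
qed

text \<open>The leading form of a commutator is the Poisson bracket D_y P D_x Q - D_x P D_y Q of the
  leading forms.  On a form of degree d the Euler relation reads \<rho> x D_x + \<sigma> y D_y = d, so for
  forms of degrees d1 and d2 with y-polynomials F and G the Poisson bracket is, up to a power of x,
  the polynomial below.\<close>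

definition lead_bracket :: "rat \<Rightarrow> rat \<Rightarrow> 'k::field_char_0 poly \<Rightarrow> 'k poly \<Rightarrow> 'k poly" where
  "lead_bracket d1 d2 F G = smult (inverse (of_int \<rho>))
     (smult (of_rat d2) (pderiv F * G) - smult (of_rat d1) (F * pderiv G))"

lemma pderiv_form_poly:
  "pderiv (form_poly d P) = (\<Sum>p\<in>{e \<in> W_supp P. deg e = d}. monom (of_nat (snd p) * P p) (snd p - 1))"
  using higher_pderiv_sum[of 1 "\<lambda>e. monom (P e) (snd e)"] by (simp add: form_poly_def pderiv_monom)

lemma coeff_lead_bracket:
  "coeff (lead_bracket d1 d2 (form_poly d1 P) (form_poly d2 Q)) b =
    (\<Sum>p\<in>{e \<in> W_supp P. deg e = d1}. \<Sum>q\<in>{e \<in> W_supp Q. deg e = d2}.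
      inverse (of_int \<rho>) *
        (of_rat d2 * (if snd p - 1 + snd q = b then of_nat (snd p) * P p * Q q else 0)
         - of_rat d1 * (if snd p + (snd q - 1) = b then P p * (of_nat (snd q) * Q q) else 0)))"
proof -
  have "coeff (pderiv (form_poly d1 P) * form_poly d2 Q) b =
      (\<Sum>p\<in>{e \<in> W_supp P. deg e = d1}. \<Sum>q\<in>{e \<in> W_supp Q. deg e = d2}.
        if snd p - 1 + snd q = b then of_nat (snd p) * P p * Q q else 0)"
    and "coeff (form_poly d1 P * pderiv (form_poly d2 Q)) b =
      (\<Sum>p\<in>{e \<in> W_supp P. deg e = d1}. \<Sum>q\<in>{e \<in> W_supp Q. deg e = d2}.
        if snd p + (snd q - 1) = b then P p * (of_nat (snd q) * Q q) else 0)"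
    unfolding pderiv_form_poly unfolding form_poly_def sum_product mult_monom
    by (simp_all add: coeff_sum coeff_monom)
  then show ?thesis unfolding lead_bracket_def coeff_smult coeff_diff
    by (simp add: sum_distrib_left sum_subtractf right_diff_distrib)
qed

lemma of_int_rho_nonzero: "(of_int \<rho> :: 'k::field_char_0) \<noteq> 0"
  using rho_pos by simp

lemma x_exponent_eq:
  assumes "deg p = d"
  shows "(of_int (fst p) / of_nat l :: 'k::field_char_0)
           = inverse (of_int \<rho>) * (of_rat d - of_int \<sigma> * of_nat (snd p))"
proof -
  from assms have "(of_rat (deg p) :: 'k) = of_rat d" by simp
  then have "of_int \<rho> * (of_int (fst p) / of_nat l) = (of_rat d - of_int \<sigma> * of_nat (snd p) :: 'k)"
    by (simp add: W_deg_def of_rat_add of_rat_mult of_rat_divide algebra_simps)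
  with of_int_rho_nonzero[where 'k='k] show ?thesis by (simp add: field_simps)
qed

lemma bracket_term_diff_eq:
  fixes P Q :: "'k::field_char_0 wl"
  assumes dp: "deg p = dP" and dq: "deg q = dQ" and de: "deg e = dP + dQ - rs"
  shows "bracket_term P Q e p q - bracket_term Q P e q p = inverse (of_int \<rho>) *
      (of_rat dQ * (if snd p - 1 + snd q = snd e then of_nat (snd p) * P p * Q q else 0)
       - of_rat dP * (if snd p + (snd q - 1) = snd e then P p * (of_nat (snd q) * Q q) else 0))"
proof (cases "snd p + snd q \<ge> 1")
  case False
  then have "snd p = 0" and "snd q = 0" by auto
  then show ?thesis by (simp add: bracket_term_def)
next
  case True
  define c where "c \<longleftrightarrow> snd p + snd q - 1 = snd e"
  have C1: "(fst p + fst q - int l = fst e \<and> snd p + snd q - 1 = snd e) \<longleftrightarrow> c"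
  proof
    assume c
    with deg_shift1[OF True] dp dq de have "deg (fst p + fst q - int l, snd e) = deg (fst e, snd e)"
      by (simp add: c_def)
    then have "fst p + fst q - int l = fst e" by (rule deg_inj_fst)
    with \<open>c\<close> show "fst p + fst q - int l = fst e \<and> snd p + snd q - 1 = snd e"
      by (simp add: c_def)
  qed (simp add: c_def)
  then have C2: "(fst q + fst p - int l = fst e \<and> snd q + snd p - 1 = snd e) \<longleftrightarrow> c"
    by (simp add: add.commute)
  have L1: "(if snd p - 1 + snd q = snd e then of_nat (snd p) * P p * Q q else 0)
      = (if c then of_nat (snd p) * P p * Q q else (0::'k))"
    unfolding c_def by (cases "snd p") auto
  have L2: "(if snd p + (snd q - 1) = snd e then P p * (of_nat (snd q) * Q q) else 0)
      = (if c then P p * (of_nat (snd q) * Q q) else (0::'k))"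
    unfolding c_def by (cases "snd q") auto
  show ?thesis
    unfolding bracket_term_def C1 C2 L1 L2
    by (cases c) (simp_all add: x_exponent_eq[OF dq] x_exponent_eq[OF dp] algebra_simps)
qed

lemma W_comm_top:
  assumes P: "W_elem P" and Q: "W_elem Q" and ge: "val P + val Q - rs \<le> deg e"
  shows "W_comm l P Q e = (if deg e = val P + val Q - rs
    then coeff (lead_bracket (val P) (val Q) (form_poly (val P) P) (form_poly (val Q) Q)) (snd e) else 0)"
proof -
  define D where "D p q = bracket_term P Q e p q - bracket_term Q P e q p" for p q
  have "W_mult l P Q e = (\<Sum>p\<in>W_supp P. \<Sum>q\<in>W_supp Q. mult_term P Q e p q 0 + bracket_term P Q e p q)"
    unfolding W_mult_eq_sum using sum_mult_term_eq_0th_1st[OF P Q _ _ ge] by simp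
  moreover have "W_mult l Q P e = (\<Sum>p\<in>W_supp P. \<Sum>q\<in>W_supp Q. mult_term P Q e p q 0 + bracket_term Q P e q p)"
  proof -
    have swap0: "mult_term Q P e q p 0 = mult_term P Q e p q 0" for p q
      by (simp add: mult_term_0 ac_simps)
    have "W_mult l Q P e = (\<Sum>q\<in>W_supp Q. \<Sum>p\<in>W_supp P. mult_term Q P e q p 0 + bracket_term Q P e q p)"
      unfolding W_mult_eq_sum using sum_mult_term_eq_0th_1st[OF Q P _ _] ge by (simp add: add.commute)
    also have "\<dots> = (\<Sum>p\<in>W_supp P. \<Sum>q\<in>W_supp Q. mult_term Q P e q p 0 + bracket_term Q P e q p)"
      by (rule sum.swap)
    finally show ?thesis by (simp only: swap0)
  qed
  ultimately have comm: "W_comm l P Q e = (\<Sum>p\<in>W_supp P. \<Sum>q\<in>W_supp Q. D p q)"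
    unfolding W_comm_def D_def by (simp add: sum_subtractf[symmetric])
  have D_deg: "deg e = deg p + deg q - rs" if "D p q \<noteq> 0" for p q
    using that bracket_term_deg[of P Q e p q] bracket_term_deg[of Q P e q p] by (force simp: D_def)
  show ?thesis
  proof (cases "deg e = val P + val Q - rs")
    case True
    have "W_comm l P Q e = (\<Sum>p\<in>{e \<in> W_supp P. deg e = val P}. \<Sum>q\<in>{e \<in> W_supp Q. deg e = val Q}. D p q)"
      unfolding comm using D_deg True by (intro sum_supp_eq_sum_top P Q) force
    also have "\<dots> = coeff (lead_bracket (val P) (val Q) (form_poly (val P) P) (form_poly (val Q) Q)) (snd e)"
      unfolding coeff_lead_bracket D_def using True by (intro sum.cong refl bracket_term_diff_eq) auto
    finally show ?thesis using True by simp
  next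
    case False
    have "D p q = 0" if "p \<in> W_supp P" "q \<in> W_supp Q" for p q
    proof (rule ccontr)
      assume "D p q \<noteq> 0"
      then have "deg e = deg p + deg q - rs" by (rule D_deg)
      with False ge deg_le_val[OF P that(1)] deg_le_val[OF Q that(2)] show False by linarith
    qed
    with False show ?thesis by (simp add: comm)
  qed
qed


lemma W_elem_mult:
  assumes P: "W_elem P" and Q: "W_elem Q"
  shows "W_elem (W_mult l P Q)"
proof -
  let ?I = "Sigma (W_supp P \<times> W_supp Q) (\<lambda>(p, q). {..snd p})"
  let ?f = "\<lambda>((p, q), k). (fst p + fst q - int k * int l, snd p + snd q - k)"
  have "finite ?I" using P Q by (intro finite_SigmaI) (auto simp: W_elem_def)
  moreover have "W_supp (W_mult l P Q) \<subseteq> ?f ` ?I"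
  proof
    fix e assume "e \<in> W_supp (W_mult l P Q)"
    then have "W_mult l P Q e \<noteq> 0" by (simp add: W_supp_def)
    then obtain p where p: "p \<in> W_supp P"
      and sp: "(\<Sum>q\<in>W_supp Q. \<Sum>k\<le>snd p. mult_term P Q e p q k) \<noteq> 0"
      unfolding W_mult_eq_sum by (rule sum.not_neutral_contains_not_neutral)
    from sp obtain q where q: "q \<in> W_supp Q" and sq: "(\<Sum>k\<le>snd p. mult_term P Q e p q k) \<noteq> 0"
      by (rule sum.not_neutral_contains_not_neutral)
    from sq obtain k where k: "k \<in> {..snd p}" and "mult_term P Q e p q k \<noteq> 0"
      by (rule sum.not_neutral_contains_not_neutral)
    then have "e = (fst p + fst q - int k * int l, snd p + snd q - k)"
      unfolding mult_term_def by (cases e) (auto split: if_splits)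
    with p q k show "e \<in> ?f ` ?I" by (intro image_eqI[of _ _ "((p, q), k)"]) auto
  qed
  ultimately show ?thesis unfolding W_elem_def by (meson finite_imageI finite_subset)
qed

lemma W_elem_comm:
  assumes "W_elem P" and "W_elem Q"
  shows "W_elem (W_comm l P Q)"
proof -
  have "W_supp (W_comm l P Q) \<subseteq> W_supp (W_mult l P Q) \<union> W_supp (W_mult l Q P)"
    by (auto simp: W_supp_def W_comm_def)
  with W_elem_mult[OF assms] W_elem_mult[OF assms(2,1)] show ?thesis
    unfolding W_elem_def by (meson finite_UnI finite_subset)
qed

lemma realizable_mult:
  assumes "realizable d1 F" and "realizable d2 G"
  shows "realizable (d1 + d2) (F * G)"
  unfolding realizable_def
proof (intro allI impI)
  fix b assume "coeff (F * G) b \<noteq> 0"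
  then obtain i where i: "i \<in> {..b}" and nz: "coeff F i * coeff G (b - i) \<noteq> 0"
    unfolding coeff_mult by (rule sum.not_neutral_contains_not_neutral)
  obtain a1 a2 where "deg (a1, i) = d1" and "deg (a2, b - i) = d2"
    using assms nz unfolding realizable_def by fastforce
  with deg_add[of "(a1, i)" "(a2, b - i)"] i have "deg (a1 + a2, b) = d1 + d2" by simp
  then show "\<exists>a. deg (a, b) = d1 + d2" by blast
qed

lemma realizable_pderiv:
  assumes "realizable d F"
  shows "realizable (d - rs) (pderiv F)"
  unfolding realizable_def
proof (intro allI impI)
  fix b assume "coeff (pderiv F) b \<noteq> 0"
  then have "coeff F (Suc b) \<noteq> 0" by (simp add: coeff_pderiv)
  with assms obtain a where a: "deg (a, Suc b) = d" unfolding realizable_def by blast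
  have "deg (a - int l, b) = deg (a, Suc b) + deg (0, 0) - rs"
    using deg_shift1[of "(a, Suc b)" "(0, 0)"] by simp
  with a have "deg (a - int l, b) = d - rs" by (simp add: W_deg_def)
  then show "\<exists>a. deg (a, b) = d - rs" by blast
qed

lemma realizable_smult: "realizable d F \<Longrightarrow> realizable d (smult c F)"
  unfolding realizable_def by auto

lemma realizable_diff: "realizable d F \<Longrightarrow> realizable d G \<Longrightarrow> realizable d (F - G)"
  unfolding realizable_def by (metis coeff_diff diff_zero)

lemma realizable_lead_bracket:
  assumes "realizable d1 F" and "realizable d2 G"
  shows "realizable (d1 + d2 - rs) (lead_bracket d1 d2 F G)"
proof -
  have "realizable (d1 + d2 - rs) (pderiv F * G)"
    using realizable_mult[OF realizable_pderiv[OF assms(1)] assms(2)] by (simp add: algebra_simps)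
  moreover have "realizable (d1 + d2 - rs) (F * pderiv G)"
    using realizable_mult[OF assms(1) realizable_pderiv[OF assms(2)]] by (simp add: algebra_simps)
  ultimately show ?thesis unfolding lead_bracket_def by (intro realizable_smult realizable_diff)
qed

text \<open>Q splits into the monomials whose y-exponents are realizable in degree d2 and the rest;
  multiplication by F keeps the two parts on disjoint sets of y-exponents, so the second part is
  killed by F.\<close>

lemma realizable_mult_cancel:
  assumes F: "realizable d1 F" "F \<noteq> 0" and FQ: "realizable (d1 + d2) (F * Q)"
  shows "realizable d2 Q"
proof -
  define Q1 where "Q1 = form_poly d2 (poly_form d2 Q)"
  define Q2 where "Q2 = Q - Q1"
  have Q1: "realizable d2 Q1" unfolding Q1_def by (rule realizable_form_poly)
  have Q2: "\<not> (\<exists>a. deg (a, b) = d2)" if "coeff Q2 b \<noteq> 0" for b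
    using that by (auto simp: Q2_def Q1_def coeff_form_poly_poly_form split: if_splits)
  have "F * Q2 = 0"
  proof (rule poly_eqI)
    fix b
    show "coeff (F * Q2) b = coeff 0 b"
    proof (cases "\<exists>a. deg (a, b) = d1 + d2")
      case True
      then obtain a where a: "deg (a, b) = d1 + d2" by blast
      have "coeff F i * coeff Q2 (b - i) = 0" if i: "i \<le> b" for i
      proof (rule ccontr)
        assume nz: "coeff F i * coeff Q2 (b - i) \<noteq> 0"
        with F(1) obtain a1 where a1: "deg (a1, i) = d1" unfolding realizable_def by auto
        have "deg (a1 + (a - a1), i + (b - i)) = deg (a1, i) + deg (a - a1, b - i)"
          using deg_add[of "(a1, i)" "(a - a1, b - i)"] by simp
        with a a1 i have "deg (a - a1, b - i) = d2" by simp
        with Q2[of "b - i"] nz show False by auto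
      qed
      then have "(\<Sum>i\<le>b. coeff F i * coeff Q2 (b - i)) = 0" by (intro sum.neutral) auto
      then show ?thesis by (simp add: coeff_mult)
    next
      case False
      with FQ realizable_mult[OF F(1) Q1] have "coeff (F * Q) b = 0" "coeff (F * Q1) b = 0"
        unfolding realizable_def by blast+
      then show ?thesis by (simp add: Q2_def right_diff_distrib)
    qed
  qed
  with F(2) have "Q2 = 0" by simp
  with Q1 show ?thesis by (simp add: Q2_def)
qed

lemma W_one_lead:
  "W_elem (W_one :: 'k::field_char_0 wl)" "(W_one :: 'k wl) \<noteq> W_zero"
  "val (W_one :: 'k wl) = 0" "form_poly 0 (W_one :: 'k wl) = 1"
proof -
  have S: "W_supp (W_one :: 'k wl) = {(0, 0)}" by (auto simp: W_supp_def W_one_def)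
  show "W_elem (W_one :: 'k wl)" by (simp add: W_elem_def S)
  show "(W_one :: 'k wl) \<noteq> W_zero" by (auto simp: W_one_def W_zero_def fun_eq_iff)
  show "val (W_one :: 'k wl) = 0" by (simp add: W_v_def S W_deg_def)
  have "{e \<in> W_supp (W_one :: 'k wl). deg e = 0} = {(0, 0)}" by (auto simp: S W_deg_def)
  then show "form_poly 0 (W_one :: 'k wl) = 1" by (simp add: form_poly_def W_one_def monom_0 pCons_one)
qed

lemma W_pow_lead:
  fixes C :: "'k::field_char_0 wl"
  assumes C: "W_elem C" "C \<noteq> W_zero"
  shows "W_elem (W_pow l C t) \<and> W_pow l C t \<noteq> W_zero \<and> val (W_pow l C t) = of_nat t * val C
     \<and> form_poly (of_nat t * val C) (W_pow l C t) = form_poly (val C) C ^ t"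
proof (induction t)
  case 0
  show ?case by (simp add: W_one_lead)
next
  case (Suc t)
  let ?P = "W_pow l C t" and ?F = "form_poly (val C) C"
  from Suc.IH have P: "W_elem ?P" "?P \<noteq> W_zero" and vP: "val ?P = of_nat t * val C"
    and FP: "form_poly (val ?P) ?P = ?F ^ t" by auto
  have "realizable (val ?P) (?F ^ t)" using realizable_form_poly[of "val ?P" ?P] unfolding FP .
  then have real: "realizable (val ?P + val C) (?F ^ t * ?F)"
    by (rule realizable_mult) (rule realizable_form_poly)
  have nonzero: "?F ^ t * ?F \<noteq> 0" using form_poly_val_nonzero[OF C] by simp
  have top: "W_mult l ?P C e = poly_form (val ?P + val C) (?F ^ t * ?F) e"
    if "val ?P + val C \<le> deg e" for e
    using W_mult_top[OF P(1) C(1) that] unfolding FP by (simp add: poly_form_def)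
  note lead = val_form_poly_eqI[OF W_elem_mult[OF P(1) C(1)] real nonzero top]
  have "val (W_mult l ?P C) = of_nat (Suc t) * val C" using lead(2) vP by (simp add: algebra_simps)
  moreover have "form_poly (of_nat (Suc t) * val C) (W_mult l ?P C) = ?F ^ Suc t"
    using lead(3) vP by (simp add: algebra_simps)
  ultimately show ?case using W_elem_mult[OF P(1) C(1)] lead(1) by simp
qed

lemma W_bracket_eq_lead_bracket:
  assumes P: "W_elem P" "P \<noteq> W_zero" and Q: "W_elem Q" "Q \<noteq> W_zero"
  defines "B \<equiv> lead_bracket (val P) (val Q) (form_poly (val P) P) (form_poly (val Q) Q)"
  shows "W_bracket l \<rho> \<sigma> P Q = (if B = 0 then W_zero else poly_form (val P + val Q - rs) B)"
proof -
  have R: "W_elem (W_comm l P Q)" by (rule W_elem_comm[OF P(1) Q(1)])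
  have top: "W_comm l P Q e = poly_form (val P + val Q - rs) B e" if "val P + val Q - rs \<le> deg e" for e
    using W_comm_top[OF P(1) Q(1) that] by (simp add: B_def poly_form_def)
  show ?thesis
  proof (cases "B = 0")
    case False
    have "realizable (val P + val Q - rs) B"
      unfolding B_def by (intro realizable_lead_bracket realizable_form_poly)
    note lead = val_form_poly_eqI[OF R this False top]
    then have "W_bracket l \<rho> \<sigma> P Q = W_ell l \<rho> \<sigma> (W_comm l P Q)"
      by (simp add: W_bracket_def)
    also have "\<dots> = poly_form (val P + val Q - rs) B" using W_ell_eq_poly_form[OF R] lead by simp
    finally show ?thesis using False by simp
  next
    case True
    show ?thesis
    proof (cases "W_comm l P Q = W_zero")
      case False
      then obtain e where e: "W_comm l P Q e \<noteq> 0" "deg e = val (W_comm l P Q)"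
        by (rule val_attained[OF R])
      have "deg e < val P + val Q - rs"
      proof (rule ccontr)
        assume "\<not> ?thesis"
        then have "W_comm l P Q e = poly_form (val P + val Q - rs) B e" by (intro top) simp
        also have "\<dots> = 0" using True by (simp add: poly_form_def)
        finally show False using e(1) by simp
      qed
      with e True show ?thesis by (simp add: W_bracket_def)
    qed (simp add: W_bracket_def True)
  qed
qed

lemma lead_bracket_power_left:
  assumes "k \<ge> 1"
  shows "lead_bracket (of_nat k * v) w (F ^ k) G = smult (of_nat k) (F ^ (k - 1) * lead_bracket v w F G)"
proof -
  obtain k' where k: "k = Suc k'" using assms by (cases k) auto
  show ?thesis unfolding k lead_bracket_def pderiv_power
    by (simp add: of_rat_mult of_rat_add algebra_simps smult_diff_right smult_add_left smult_add_right)
qed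

lemma lead_bracket_power_mult_right:
  "lead_bracket v (of_nat j * v + s) F (F ^ j * Q) = F ^ j * lead_bracket v s F Q"
proof (cases j)
  case (Suc j')
  then show ?thesis unfolding lead_bracket_def pderiv_mult pderiv_power
    by (simp add: of_rat_mult of_rat_add algebra_simps smult_diff_right smult_add_right smult_add_left)
qed simp

lemma lead_bracket_smult_right: "lead_bracket v s F (smult c Q) = smult c (lead_bracket v s F Q)"
  unfolding lead_bracket_def by (simp add: pderiv_smult algebra_simps smult_diff_right)

lemma realizable_power: "realizable d F \<Longrightarrow> realizable (of_nat n * d) (F ^ n)"
proof (induction n)
  case 0
  then show ?case by (auto simp: realizable_def W_deg_def intro: exI[of _ 0])
next
  case (Suc n)
  then show ?case using realizable_mult[of d F "of_nat n * d" "F ^ n"] by (simp add: algebra_simps)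
qed

lemma wronskian_of_smult_lead_bracket:
  fixes F G P :: "'k::field_char_0 poly"
  assumes "c \<noteq> 0" and "smult c (lead_bracket v w F G) = P"
  shows "smult (of_rat w) (pderiv F * G) - smult (of_rat v) (F * pderiv G) = smult (of_int \<rho> / c) P"
proof -
  define X where "X = smult (of_rat w) (pderiv F * G) - smult (of_rat v) (F * pderiv G)"
  have "(of_int \<rho> / c) * (c * inverse (of_int \<rho>)) = (1 :: 'k)"
    using assms(1) of_int_rho_nonzero[where 'k='k] by (simp add: field_simps)
  then have "X = smult (of_int \<rho> / c) (smult (c * inverse (of_int \<rho>)) X)"
    by (simp only: smult_smult smult_1_left)
  also have "smult (c * inverse (of_int \<rho>)) X = P"
    using assms(2) by (simp add: lead_bracket_def X_def)
  finally show ?thesis unfolding X_def .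
qed

lemma lead_bracket_power_left_cancel:
  assumes "k \<ge> 1" and "F \<noteq> 0"
    and eq: "lead_bracket (of_nat k * v) w (F ^ k) G = F ^ (k + j)"
  shows "smult (of_nat k) (lead_bracket v w F G) = F ^ (j + 1)"
proof -
  have "F ^ (k - 1) * smult (of_nat k) (lead_bracket v w F G)
      = smult (of_nat k) (F ^ (k - 1) * lead_bracket v w F G)"
    by (simp add: mult_smult_right)
  also have "\<dots> = lead_bracket (of_nat k * v) w (F ^ k) G"
    by (rule lead_bracket_power_left[OF \<open>k \<ge> 1\<close>, symmetric])
  also have "\<dots> = F ^ (k + j)" by (rule eq)
  also have "\<dots> = F ^ (k - 1) * F ^ (j + 1)"
  proof -
    have "k + j = (k - 1) + (j + 1)" using \<open>k \<ge> 1\<close> by simp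
    then show ?thesis by (simp only: power_add)
  qed
  finally have "F ^ (k - 1) * smult (of_nat k) (lead_bracket v w F G) = F ^ (k - 1) * F ^ (j + 1)" .
  moreover have "F ^ (k - 1) \<noteq> 0" using \<open>F \<noteq> 0\<close> by simp
  ultimately show ?thesis using mult_left_cancel by blast
qed

lemma W_ell_pow:
  assumes "W_elem C" and "C \<noteq> W_zero"
  shows "W_ell l \<rho> \<sigma> (W_pow l C t) = poly_form (of_nat t * val C) (form_poly (val C) C ^ t)"
  using W_ell_eq_poly_form[of "W_pow l C t"] W_pow_lead[OF assms, of t] by simp

lemma W_bracket_pow_eq_lead_bracket:
  fixes t :: nat
  assumes C: "W_elem C" "C \<noteq> W_zero" and E: "W_elem E" "E \<noteq> W_zero"
  defines "B \<equiv> lead_bracket (of_nat t * val C) (val E) (form_poly (val C) C ^ t) (form_poly (val E) E)"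
  shows "W_bracket l \<rho> \<sigma> (W_pow l C t) E
           = (if B = 0 then W_zero else poly_form (of_nat t * val C + val E - rs) B)"
  using W_bracket_eq_lead_bracket[of "W_pow l C t" E] W_pow_lead[OF C, of t] E by (simp add: B_def)

lemma lead_bracket_of_bracket_eq_ell:
  fixes C D :: "'k::field_char_0 wl"
  assumes C: "W_elem C" "C \<noteq> W_zero" and D: "W_elem D" "D \<noteq> W_zero" and "k \<ge> 1"
    and hyp: "W_bracket l \<rho> \<sigma> (W_pow l C k) D = W_ell l \<rho> \<sigma> (W_pow l C (k + j))"
  defines "F \<equiv> form_poly (val C) C" and "G \<equiv> form_poly (val D) D"
  shows "val D = of_nat j * val C + rs"
    and "smult (of_nat k) (lead_bracket (val C) (val D) F G) = F ^ (j + 1)"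
proof -
  have F0: "F \<noteq> 0" unfolding F_def by (rule form_poly_val_nonzero[OF C])
  have realF: "realizable (of_nat t * val C) (F ^ t)" for t
    using realizable_form_poly[of "of_nat t * val C" "W_pow l C t"] W_pow_lead[OF C, of t]
    by (simp add: F_def)
  define B where "B = lead_bracket (of_nat k * val C) (val D) (F ^ k) G"
  from hyp have eqn: "(if B = 0 then W_zero else poly_form (of_nat k * val C + val D - rs) B)
      = poly_form (of_nat (k + j) * val C) (F ^ (k + j))"
    unfolding W_bracket_pow_eq_lead_bracket[OF C D] W_ell_pow[OF C]
      F_def[symmetric] G_def[symmetric] B_def[symmetric] .
  have "F ^ (k + j) \<noteq> 0" using F0 by simp
  then obtain e where "deg e = of_nat (k + j) * val C"
    and nonzero: "poly_form (of_nat (k + j) * val C) (F ^ (k + j)) e \<noteq> 0"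
    by (rule poly_form_nonzero[OF realF])
  have B0: "B \<noteq> 0"
  proof
    assume "B = 0"
    with eqn have "poly_form (of_nat (k + j) * val C) (F ^ (k + j)) e = W_zero e" by simp
    with nonzero show False by (simp add: W_zero_def)
  qed
  with eqn have "poly_form (of_nat k * val C + val D - rs) B
      = poly_form (of_nat (k + j) * val C) (F ^ (k + j))" by simp
  moreover have "realizable (of_nat k * val C + val D - rs) B"
    unfolding B_def G_def by (intro realizable_lead_bracket realF realizable_form_poly)
  ultimately have degs: "of_nat k * val C + val D - rs = of_nat (k + j) * val C"
    and BF: "B = F ^ (k + j)"
    using poly_form_inj[OF _ B0 realF] by blast+
  from degs show "val D = of_nat j * val C + rs" by (simp add: algebra_simps)
  from BF show "smult (of_nat k) (lead_bracket (val C) (val D) F G) = F ^ (j + 1)"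
    unfolding B_def by (rule lead_bracket_power_left_cancel[OF \<open>k \<ge> 1\<close> F0])
qed

lemma lead_bracket_eigenpoly_exists:
  fixes F G :: "'k::field_char_0 poly"
  assumes F: "realizable v F" "F \<noteq> 0" and G: "realizable w G" "G \<noteq> 0"
    and "v > 0" and "k \<ge> 1" and w: "w = of_nat j * v + rs"
    and eq: "smult (of_nat k) (lead_bracket v w F G) = F ^ (j + 1)"
  obtains H where "realizable rs H" and "H \<noteq> 0" and "lead_bracket v rs F H = F"
proof -
  have k0: "(of_nat k :: 'k) \<noteq> 0" using \<open>k \<ge> 1\<close> by simp
  note wronskian = wronskian_of_smult_lead_bracket[OF k0 eq]
  have nonresonant: "of_rat w * of_nat m - of_rat v * of_nat n \<noteq> (0::'k)"
    if "0 < m" and "n < j * m" for m n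
  proof -
    have "rat_of_nat n < of_nat (j * m)" using that(2) by (simp only: of_nat_less_iff)
    with \<open>v > 0\<close> have "v * of_nat n < v * of_nat (j * m)" by simp
    moreover have "rs * of_nat m > 0" using rs_pos that by simp
    ultimately have "w * of_nat m - v * of_nat n > 0" unfolding w by (simp add: algebra_simps)
    then have "(of_rat (w * of_nat m - v * of_nat n) :: 'k) \<noteq> 0" by simp
    then show ?thesis by (simp add: of_rat_diff of_rat_mult)
  qed
  have "F ^ j dvd G"
    using power_dvd_of_wronskian_eq[OF F(2) G(2) wronskian nonresonant] .
  then obtain Q where GQ: "G = F ^ j * Q" by (elim dvdE)
  with G(2) have "Q \<noteq> 0" by auto
  have Fj: "F ^ j \<noteq> 0" using F(2) by simp
  have "realizable (of_nat j * v + rs) (F ^ j * Q)" using G(1) unfolding w GQ .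
  with realizable_power[OF F(1)] Fj have realQ: "realizable rs Q" by (rule realizable_mult_cancel)
  have "F ^ j * smult (of_nat k) (lead_bracket v rs F Q) = smult (of_nat k) (lead_bracket v w F G)"
    unfolding w GQ lead_bracket_power_mult_right by (simp add: mult_smult_right)
  also have "\<dots> = F ^ j * F" unfolding eq by simp
  finally have "smult (of_nat k) (lead_bracket v rs F Q) = F" using mult_left_cancel[OF Fj] by blast
  then have eigen: "lead_bracket v rs F (smult (of_nat k) Q) = F" by (simp only: lead_bracket_smult_right)
  moreover have "smult (of_nat k) Q \<noteq> 0" using \<open>Q \<noteq> 0\<close> k0 by simp
  ultimately show thesis using realizable_smult[OF realQ] that by blast
qed

lemma W_bracket_pow_eigen:
  fixes C :: "'k::field_char_0 wl"
  assumes C: "W_elem C" "C \<noteq> W_zero" and H: "realizable rs H" "H \<noteq> 0"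
    and eigen: "lead_bracket (val C) rs (form_poly (val C) C) H = form_poly (val C) C"
    and "t \<ge> 1"
  shows "W_bracket l \<rho> \<sigma> (W_pow l C t) (poly_form rs H)
           = (\<lambda>e. of_nat t * W_ell l \<rho> \<sigma> (W_pow l C t) e)"
proof -
  define F where "F = form_poly (val C) C"
  note E = val_form_poly_eqI[OF W_elem_poly_form H refl]
  have "F \<noteq> 0" unfolding F_def by (rule form_poly_val_nonzero[OF C])
  have "lead_bracket (of_nat t * val C) rs (F ^ t) H = smult (of_nat t) (F ^ (t - 1) * F)"
    using lead_bracket_power_left[OF \<open>t \<ge> 1\<close>, of "val C" rs F H] eigen by (simp add: F_def)
  also have "F ^ (t - 1) * F = F ^ t" using \<open>t \<ge> 1\<close> by (simp flip: power_Suc2)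
  finally have "W_bracket l \<rho> \<sigma> (W_pow l C t) (poly_form rs H)
      = poly_form (of_nat t * val C) (smult (of_nat t) (F ^ t))"
    using W_bracket_pow_eq_lead_bracket[OF C W_elem_poly_form E(1), of t] E \<open>F \<noteq> 0\<close> \<open>t \<ge> 1\<close>
    by (simp add: F_def)
  then show ?thesis using W_ell_pow[OF C] by (simp add: F_def poly_form_apply_smult fun_eq_iff)
qed

end

theorem theorem2p15:
  fixes l :: nat and \<rho> \<sigma> :: int and C D :: "'k::field_char_0 wl" and k j :: nat
  assumes "l \<ge> 1"
    and "(\<rho>, \<sigma>) \<in> frakV" and "\<sigma> \<le> 0"
    and "W_elem C" and "W_elem D" and "C \<noteq> W_zero" and "D \<noteq> W_zero"
    and "W_v l \<rho> \<sigma> C > 0"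
    and "k \<ge> 1"
    and "W_bracket l \<rho> \<sigma> (W_pow l C k) D = W_ell l \<rho> \<sigma> (W_pow l C (k + j))"
  shows "\<exists>E. W_elem E \<and> W_homog l \<rho> \<sigma> E \<and>
           (\<forall>t\<ge>1. W_bracket l \<rho> \<sigma> (W_pow l C t) E
                    = (\<lambda>e. of_nat t * W_ell l \<rho> \<sigma> (W_pow l C t) e))"
proof -
  from assms(2,3) have "\<rho> + \<sigma> > 0" and "\<rho> > 0" by (auto simp: frakV_def)
  with assms(1) interpret rho_sigma_grading l \<rho> \<sigma> by unfold_locales
  define F where "F = form_poly (val C) C"
  define G where "G = form_poly (val D) D"
  have F: "realizable (val C) F" "F \<noteq> 0" and G: "realizable (val D) G" "G \<noteq> 0"
    unfolding F_def G_def using assms(4-7) by (simp_all add: realizable_form_poly form_poly_val_nonzero)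
  have "val D = of_nat j * val C + rs" and "smult (of_nat k) (lead_bracket (val C) (val D) F G) = F ^ (j + 1)"
    using lead_bracket_of_bracket_eq_ell[OF assms(4,6,5,7,9,10)] by (simp_all add: F_def G_def)
  with F G assms(8,9) obtain H where H: "realizable rs H" "H \<noteq> 0"
    and eigen: "lead_bracket (val C) rs F H = F"
    by (rule lead_bracket_eigenpoly_exists)
  show ?thesis
    using W_elem_poly_form W_homog_poly_form W_bracket_pow_eigen[OF assms(4,6) H eigen[unfolded F_def]]
    by blast
qed

end
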